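(* Let $T>0$ and $I\geq 1$. Consider the system of renewal equations, for $1\leq i\leq I$, $t\in\mathbb{R}$, $x\geq 0$, $$\partial_t n_i(t,x)+\partial_x n_i(t,x)+d_i(t,x)\,n_i(t,x)=0,\qquad n_i(t,0)=\sum_{j=1}^I\int_0^\infty B_{j\rightarrow i}(t,x)\,n_j(t,x)\,dx,$$ with nonnegative coefficients $d_i$, $B_{j\rightarrow i}$ that are $T$-periodic in $t$. Let $(B^1_{j\rightarrow i},d^1_i)_{1\leq i,j\leq I}$ and $(B^2_{j\rightarrow i},d^2_i)_{1\leq i,j\leq I}$ be two such sets of coefficients, with associated dominant (Floquet) eigenvalues $\lambda_F^1$ and $\lambda_F^2$. For $\theta\in[0,1]$ set $$d_i^\theta=\theta d_i^1+(1-\theta)d_i^2,\qquad B^\theta_{j\rightarrow i}=(B^1_{j\rightarrow i})^\theta(B^2_{j\rightarrow i})^{1-\theta},$$ and let $\lambda_F^\theta$ be the dominant eigenvalue associated with the coefficients $(B^\theta_{j\rightarrow i},d_i^\theta)$. Then for every $\theta\in[0,1]$, $$\lambda_F^\theta\leq \theta\lambda_F^1+(1-\theta)\lambda_F^2.$$ That is, the dominant eigenvalue is convex with respect to the death rates $d_i$ and geometrically convex with respect to the birth rates $B_{j\rightarrow i}$.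
   Context: The dominant (Floquet) eigenvalue $\lambda_F$ of the system is the real number governing the growth of solutions (solutions behave like $e^{\lambda_F t}$ times a bounded term). When positive $T$-periodic eigenelements exist, $\lambda_F$ is the unique real $\lambda$ for which there exist nonnegative, nonzero, $T$-periodic $N_i$ with $\partial_t N_i+\partial_x N_i+(d_i+\lambda)N_i=0$, $N_i(t,0)=\sum_j\int_0^\infty B_{j\rightarrow i}N_j\,dx$, together with positive $T$-periodic dual eigenfunctions $\phi_j$ satisfying $-\partial_t\phi_j-\partial_x\phi_j+(d_j+\lambda)\phi_j=\sum_i B_{j\rightarrow i}(t,x)\phi_i(t,0)$. In general (Collatz–Wielandt type definition), $\lambda_F$ is the infimum of the reals $\mu$ for which there exist positive functions $\phi_{\mu,j}$, $T$-periodic in $t$, with $-\partial_t\phi_{\mu,j}(t,x)-\partial_x\phi_{\mu,j}(t,x)+[d_j(t,x)+\mu]\phi_{\mu,j}(t,x)\geq\sum_i B_{j\rightarrow i}(t,x)\phi_{\mu,i}(t,0)$; the two definitions coincide when eigenelements exist. *)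

theory Defs
  imports "HOL-Analysis.Analysis"
begin

text \<open>Coefficients: indices range over {1..I}; d i t x is the death rate d_i(t,x);
  B j i t x is the birth kernel B_{j -> i}(t,x); functions are of t \<in> \<real>, x \<ge> 0.\<close>

definition periodic_coeffs ::
  "nat \<Rightarrow> real \<Rightarrow> (nat \<Rightarrow> nat \<Rightarrow> real \<Rightarrow> real \<Rightarrow> real) \<Rightarrow> (nat \<Rightarrow> real \<Rightarrow> real \<Rightarrow> real) \<Rightarrow> bool" where
  "periodic_coeffs I T B d \<longleftrightarrow>
     (\<forall>i\<in>{1..I}. \<forall>t x. x \<ge> 0 \<longrightarrow> d i t x \<ge> 0 \<and> d i (t + T) x = d i t x) \<and>
     (\<forall>i\<in>{1..I}. \<forall>j\<in>{1..I}. \<forall>t x. x \<ge> 0 \<longrightarrow> B j i t x \<ge> 0 \<and> B j i (t + T) x = B j i t x)"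

text \<open>The transport operator \<partial>_t + \<partial>_x is understood as the derivative along the
  characteristic s \<mapsto> (t+s, x+s) (one-sided at the boundary x = 0).\<close>

definition supersol ::
  "nat \<Rightarrow> real \<Rightarrow> (nat \<Rightarrow> nat \<Rightarrow> real \<Rightarrow> real \<Rightarrow> real) \<Rightarrow> (nat \<Rightarrow> real \<Rightarrow> real \<Rightarrow> real)
     \<Rightarrow> real \<Rightarrow> (nat \<Rightarrow> real \<Rightarrow> real \<Rightarrow> real) \<Rightarrow> bool" where
  "supersol I T B d \<mu> \<phi> \<longleftrightarrow>
     (\<forall>j\<in>{1..I}. \<forall>t x. x \<ge> 0 \<longrightarrow>
        \<phi> j t x > 0 \<and> \<phi> j (t + T) x = \<phi> j t x \<and>
        (\<exists>D. ((\<lambda>s. \<phi> j (t + s) (x + s)) has_real_derivative D) (at 0 within {-x..}) \<and>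
             - D + (d j t x + \<mu>) * \<phi> j t x \<ge> (\<Sum>i\<in>{1..I}. B j i t x * \<phi> i t 0)))"

text \<open>Dominant (Floquet) eigenvalue, Collatz--Wielandt definition: the infimum of the
  admissible \<mu>, taken in the extended reals (= \<infinity> if no such \<mu>, -\<infinity> if unbounded below).\<close>

definition floquet ::
  "nat \<Rightarrow> real \<Rightarrow> (nat \<Rightarrow> nat \<Rightarrow> real \<Rightarrow> real \<Rightarrow> real) \<Rightarrow> (nat \<Rightarrow> real \<Rightarrow> real \<Rightarrow> real) \<Rightarrow> ereal" where
  "floquet I T B d = Inf (ereal ` {\<mu>. \<exists>\<phi>. supersol I T B d \<mu> \<phi>})"

definition rpow :: "real \<Rightarrow> real \<Rightarrow> real" where
  "rpow a e = (if e = 0 then 1 else a powr e)"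

end

theory Submission
  imports Defs
begin

text \<open>If \<phi>1 and \<phi>2 are Collatz--Wielandt super-solutions for the two sets of coefficients with
  parameters \<mu>1 and \<mu>2, then their weighted geometric mean \<phi>1^\<theta> \<phi>2^(1-\<theta>) is one for the
  interpolated coefficients with parameter \<theta>\<mu>1 + (1-\<theta>)\<mu>2: the transport term is linear
  in log \<phi>, and the birth term is controlled by Young's inequality
  B1^\<theta> B2^(1-\<theta>) u^\<theta> v^(1-\<theta>) \<le> \<theta> B1 u + (1-\<theta>) B2 v. Taking infima over \<mu>1 and \<mu>2
  gives the inequality for the Floquet eigenvalues.\<close>

lemma rpow_weighted_geometric_le_arithmetic:
  assumes "0 \<le> a" "0 \<le> b" "0 \<le> \<theta>" "\<theta> \<le> 1"
  shows "rpow a \<theta> * rpow b (1 - \<theta>) \<le> \<theta> * a + (1 - \<theta>) * b"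
proof (cases "\<theta> = 0 \<or> \<theta> = 1 \<or> a = 0 \<or> b = 0")
  case True
  then show ?thesis
    using assms by (auto simp: rpow_def)
next
  case False
  then show ?thesis
    using assms Youngs_inequality_0[of \<theta> "1 - \<theta>" a b] by (simp add: rpow_def)
qed

lemma rpow_mult_pos_right:
  assumes "0 \<le> a" "0 < c"
  shows "rpow (a * c) e = rpow a e * c powr e"
  using assms by (simp add: rpow_def powr_mult)

lemma rpow_geometric_mean_rescaled_le:
  assumes "0 \<le> a" "0 \<le> b" "0 < p" "0 < q" "0 < P" "0 < Q" "0 \<le> \<theta>" "\<theta> \<le> 1"
  shows "rpow a \<theta> * rpow b (1 - \<theta>) * (p powr \<theta> * q powr (1 - \<theta>))
         \<le> P powr \<theta> * Q powr (1 - \<theta>) * (\<theta> * (a * p / P) + (1 - \<theta>) * (b * q / Q))"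
proof -
  have "rpow (a * (p / P)) \<theta> = rpow a \<theta> * (p powr \<theta> / P powr \<theta>)"
    "rpow (b * (q / Q)) (1 - \<theta>) = rpow b (1 - \<theta>) * (q powr (1 - \<theta>) / Q powr (1 - \<theta>))"
    using assms rpow_mult_pos_right[of a "p / P" \<theta>] rpow_mult_pos_right[of b "q / Q" "1 - \<theta>"]
    by (simp_all add: powr_divide)
  then have "rpow a \<theta> * rpow b (1 - \<theta>) * (p powr \<theta> * q powr (1 - \<theta>))
        = P powr \<theta> * Q powr (1 - \<theta>) * (rpow (a * (p / P)) \<theta> * rpow (b * (q / Q)) (1 - \<theta>))"
    using assms by simp
  also have "\<dots> \<le> P powr \<theta> * Q powr (1 - \<theta>) * (\<theta> * (a * (p / P)) + (1 - \<theta>) * (b * (q / Q)))"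
    using assms by (intro mult_left_mono rpow_weighted_geometric_le_arithmetic) auto
  finally show ?thesis
    by simp
qed

lemma has_real_derivative_geometric_mean:
  assumes "(f has_real_derivative Df) (at x within S)" and "(g has_real_derivative Dg) (at x within S)"
    and "f x > 0" and "g x > 0" and "x \<in> S"
  shows "((\<lambda>s. f s powr \<theta> * g s powr (1 - \<theta>)) has_real_derivative
           f x powr \<theta> * g x powr (1 - \<theta>) * (\<theta> * Df / f x + (1 - \<theta>) * Dg / g x)) (at x within S)"
  using assms unfolding has_field_derivative_def
  by (auto intro!: derivative_eq_intros has_derivative_powr simp: algebra_simps)

lemma supersol_interpolate:
  assumes B1: "periodic_coeffs I T B1 d1" and B2: "periodic_coeffs I T B2 d2"
    and S1: "supersol I T B1 d1 \<mu>1 \<phi>1" and S2: "supersol I T B2 d2 \<mu>2 \<phi>2"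
    and \<theta>: "0 \<le> \<theta>" "\<theta> \<le> 1"
  shows "supersol I T (\<lambda>j i t x. rpow (B1 j i t x) \<theta> * rpow (B2 j i t x) (1 - \<theta>))
                     (\<lambda>i t x. \<theta> * d1 i t x + (1 - \<theta>) * d2 i t x) (\<theta> * \<mu>1 + (1 - \<theta>) * \<mu>2)
           (\<lambda>j t x. \<phi>1 j t x powr \<theta> * \<phi>2 j t x powr (1 - \<theta>))"
  unfolding supersol_def
proof (intro ballI allI impI conjI)
  let ?\<phi> = "\<lambda>j t x. \<phi>1 j t x powr \<theta> * \<phi>2 j t x powr (1 - \<theta>)"
  fix j t x
  assume j: "j \<in> {1..I}" and x: "(0::real) \<le> x"
  have pos: "\<phi>1 i t' x' > 0" "\<phi>2 i t' x' > 0" if "i \<in> {1..I}" "0 \<le> x'" for i t' x'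
    using S1 S2 that unfolding supersol_def by auto
  show "?\<phi> j (t + T) x = ?\<phi> j t x"
    using S1 S2 j x unfolding supersol_def by simp
  obtain D1 where D1: "((\<lambda>s. \<phi>1 j (t + s) (x + s)) has_real_derivative D1) (at 0 within {-x..})"
    and I1: "(\<Sum>i\<in>{1..I}. B1 j i t x * \<phi>1 i t 0) \<le> - D1 + (d1 j t x + \<mu>1) * \<phi>1 j t x"
    using S1 j x unfolding supersol_def by blast
  obtain D2 where D2: "((\<lambda>s. \<phi>2 j (t + s) (x + s)) has_real_derivative D2) (at 0 within {-x..})"
    and I2: "(\<Sum>i\<in>{1..I}. B2 j i t x * \<phi>2 i t 0) \<le> - D2 + (d2 j t x + \<mu>2) * \<phi>2 j t x"
    using S2 j x unfolding supersol_def by blast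
  let ?P1 = "\<phi>1 j t x" and ?P2 = "\<phi>2 j t x"
  have P: "0 < ?P1" "0 < ?P2"
    using pos j x by auto
  then show "0 < ?\<phi> j t x"
    by simp
  let ?D = "?\<phi> j t x * (\<theta> * D1 / ?P1 + (1 - \<theta>) * D2 / ?P2)"
  have "(\<Sum>i\<in>{1..I}. rpow (B1 j i t x) \<theta> * rpow (B2 j i t x) (1 - \<theta>) * ?\<phi> i t 0)
      \<le> (\<Sum>i\<in>{1..I}. ?\<phi> j t x *
            (\<theta> * (B1 j i t x * \<phi>1 i t 0 / ?P1) + (1 - \<theta>) * (B2 j i t x * \<phi>2 i t 0 / ?P2)))"
  proof (rule sum_mono)
    fix i assume i: "i \<in> {1..I}"
    have "B1 j i t x \<ge> 0" "B2 j i t x \<ge> 0"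
      using B1 B2 i j x unfolding periodic_coeffs_def by auto
    then show "rpow (B1 j i t x) \<theta> * rpow (B2 j i t x) (1 - \<theta>) * ?\<phi> i t 0
      \<le> ?\<phi> j t x * (\<theta> * (B1 j i t x * \<phi>1 i t 0 / ?P1) + (1 - \<theta>) * (B2 j i t x * \<phi>2 i t 0 / ?P2))"
      using pos i j x \<theta> by (intro rpow_geometric_mean_rescaled_le) auto
  qed
  also have "\<dots> = ?\<phi> j t x * (\<theta> * (\<Sum>i\<in>{1..I}. B1 j i t x * \<phi>1 i t 0) / ?P1
                               + (1 - \<theta>) * (\<Sum>i\<in>{1..I}. B2 j i t x * \<phi>2 i t 0) / ?P2)"
    by (simp add: distrib_left sum.distrib sum_distrib_left sum_divide_distrib)
  also have "\<dots> \<le> ?\<phi> j t x * (\<theta> * (- D1 + (d1 j t x + \<mu>1) * ?P1) / ?P1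
                               + (1 - \<theta>) * (- D2 + (d2 j t x + \<mu>2) * ?P2) / ?P2)"
    using I1 I2 P \<theta>
    by (intro mult_left_mono add_mono divide_right_mono) auto
  also have "\<dots> = - ?D + ((\<theta> * d1 j t x + (1 - \<theta>) * d2 j t x) + (\<theta> * \<mu>1 + (1 - \<theta>) * \<mu>2)) * ?\<phi> j t x"
    using P by (simp add: field_simps)
  finally have "(\<Sum>i\<in>{1..I}. rpow (B1 j i t x) \<theta> * rpow (B2 j i t x) (1 - \<theta>) * ?\<phi> i t 0)
      \<le> - ?D + ((\<theta> * d1 j t x + (1 - \<theta>) * d2 j t x) + (\<theta> * \<mu>1 + (1 - \<theta>) * \<mu>2)) * ?\<phi> j t x" .
  moreover have "((\<lambda>s. ?\<phi> j (t + s) (x + s)) has_real_derivative ?D) (at 0 within {-x..})"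
    using has_real_derivative_geometric_mean[OF D1 D2] P x by simp
  ultimately show "\<exists>D. ((\<lambda>s. ?\<phi> j (t + s) (x + s)) has_real_derivative D) (at 0 within {-x..}) \<and>
      (\<Sum>i\<in>{1..I}. rpow (B1 j i t x) \<theta> * rpow (B2 j i t x) (1 - \<theta>) * ?\<phi> i t 0)
      \<le> - D + ((\<theta> * d1 j t x + (1 - \<theta>) * d2 j t x) + (\<theta> * \<mu>1 + (1 - \<theta>) * \<mu>2)) * ?\<phi> j t x"
    by blast
qed

lemma Inf_ereal_affine:
  fixes S :: "real set"
  assumes "S \<noteq> {}" and "0 \<le> c"
  shows "Inf (ereal ` (\<lambda>s. c * s + b) ` S) = ereal c * Inf (ereal ` S) + ereal b"
proof -
  have "mono (\<lambda>y. ereal c * y + ereal b)"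
    using assms(2) by (intro monoI add_right_mono ereal_mult_left_mono) auto
  moreover have "continuous (at y within A) (\<lambda>y. ereal c * y + ereal b)" for y A
    unfolding continuous_within by (intro tendsto_intros) auto
  ultimately have "ereal c * Inf (ereal ` S) + ereal b = (INF y\<in>ereal ` S. ereal c * y + ereal b)"
    using assms(1) by (intro continuous_at_Inf_mono) auto
  then show ?thesis
    by (simp add: image_image)
qed

lemma convex_comb_Inf_ereal_greatest:
  fixes A B :: "real set"
  assumes "A \<noteq> {}" "B \<noteq> {}" "0 \<le> \<theta>" "\<theta> \<le> 1"
    and le: "\<And>a b. a \<in> A \<Longrightarrow> b \<in> B \<Longrightarrow> X \<le> ereal (\<theta> * a + (1 - \<theta>) * b)"
  shows "X \<le> ereal \<theta> * Inf (ereal ` A) + ereal (1 - \<theta>) * Inf (ereal ` B)"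
proof -
  have X_le: "X \<le> ereal \<theta> * Inf (ereal ` A) + ereal ((1 - \<theta>) * b)" if "b \<in> B" for b
  proof -
    have "X \<le> Inf (ereal ` (\<lambda>a. \<theta> * a + (1 - \<theta>) * b) ` A)"
      using le that by (auto intro!: Inf_greatest)
    then show ?thesis
      using Inf_ereal_affine assms by simp
  qed
  obtain b where b: "b \<in> B"
    using assms(2) by blast
  obtain a where "a \<in> A"
    using assms(1) by blast
  then have "Inf (ereal ` A) \<noteq> \<infinity>"
    using Inf_lower[of "ereal a" "ereal ` A"] by auto
  then have "ereal \<theta> * Inf (ereal ` A) \<noteq> \<infinity>"
    using assms(3) by (cases "Inf (ereal ` A)") auto
  then consider "ereal \<theta> * Inf (ereal ` A) = -\<infinity>" | r where "ereal \<theta> * Inf (ereal ` A) = ereal r"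
    by (cases "ereal \<theta> * Inf (ereal ` A)") auto
  then show ?thesis
  proof cases
    case 1
    have "X = -\<infinity>"
      using X_le[OF b] unfolding 1 by simp
    then show ?thesis
      by simp
  next
    case 2
    have "X \<le> Inf (ereal ` (\<lambda>b. (1 - \<theta>) * b + r) ` B)"
      using X_le 2 by (auto intro!: Inf_greatest simp: add.commute)
    then show ?thesis
      using Inf_ereal_affine[of B "1 - \<theta>" r] assms 2 by (simp add: add.commute)
  qed
qed

theorem theorem1:
  fixes I :: nat and T \<theta> :: real
    and B1 B2 :: "nat \<Rightarrow> nat \<Rightarrow> real \<Rightarrow> real \<Rightarrow> real"
    and d1 d2 :: "nat \<Rightarrow> real \<Rightarrow> real \<Rightarrow> real"
  assumes "T > 0" and "I \<ge> 1"
    and "periodic_coeffs I T B1 d1" and "periodic_coeffs I T B2 d2"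
    and "floquet I T B1 d1 < \<infinity>" and "floquet I T B2 d2 < \<infinity>"
    and "0 \<le> \<theta>" and "\<theta> \<le> 1"
  shows "floquet I T (\<lambda>j i t x. rpow (B1 j i t x) \<theta> * rpow (B2 j i t x) (1 - \<theta>))
                     (\<lambda>i t x. \<theta> * d1 i t x + (1 - \<theta>) * d2 i t x)
         \<le> ereal \<theta> * floquet I T B1 d1 + ereal (1 - \<theta>) * floquet I T B2 d2"
proof -
  have "{\<mu>. \<exists>\<phi>. supersol I T B1 d1 \<mu> \<phi>} \<noteq> {}" "{\<mu>. \<exists>\<phi>. supersol I T B2 d2 \<mu> \<phi>} \<noteq> {}"
    using assms(5,6) unfolding floquet_def by (intro notI; simp add: top_ereal_def)+
  then show ?thesis
    unfolding floquet_def
  proof (rule convex_comb_Inf_ereal_greatest[OF _ _ assms(7,8)])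
    fix \<mu>1 \<mu>2
    assume "\<mu>1 \<in> {\<mu>. \<exists>\<phi>. supersol I T B1 d1 \<mu> \<phi>}" "\<mu>2 \<in> {\<mu>. \<exists>\<phi>. supersol I T B2 d2 \<mu> \<phi>}"
    then obtain \<phi>1 \<phi>2 where "supersol I T B1 d1 \<mu>1 \<phi>1" "supersol I T B2 d2 \<mu>2 \<phi>2"
      by blast
    from supersol_interpolate[OF assms(3,4) this assms(7,8)]
    show "Inf (ereal ` {\<mu>. \<exists>\<phi>. supersol I T (\<lambda>j i t x. rpow (B1 j i t x) \<theta> * rpow (B2 j i t x) (1 - \<theta>))
                              (\<lambda>i t x. \<theta> * d1 i t x + (1 - \<theta>) * d2 i t x) \<mu> \<phi>})
          \<le> ereal (\<theta> * \<mu>1 + (1 - \<theta>) * \<mu>2)"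
      by (blast intro: Inf_lower)
  qed
qed

end
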